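(* For any positive integers $n, q$ there exist an arena $\mathcal{A}$ (over a finite set of colors) with $n+3$ nodes, a node $u$ of $\mathcal{A}$, and a $q$-state strategy $S_1$ of Player 0 in $\mathcal{A}$ such that for every chromatic $Q$-state strategy $S_2$ of Player 0 in $\mathcal{A}$: if $\mathsf{col}(S_2,u)\subseteq\mathsf{col}(S_1,u)$, then $Q\ge q^n$.
   Context: An arena over a set of colors $C$ is a tuple $\mathcal{A} = \langle V, V_0, V_1, E\rangle$ of finite sets with $V = V_0 \sqcup V_1$, $E \subseteq V \times C \times V$, and every node having at least one outgoing edge; for $e=(s,c,t)$ write $\mathsf{source}(e)=s$, $\mathsf{col}(e)=c$, $\mathsf{target}(e)=t$. A path is a nonempty finite or infinite sequence of edges $e_1e_2\ldots$ with $\mathsf{target}(e_i)=\mathsf{source}(e_{i+1})$; for each node $v$ there is also a $0$-length path $\lambda_v$ with source and target $v$. $\mathsf{col}$ extends letterwise to sequences of edges. A strategy of Player 0 is a function $S$ assigning to each finite path $p$ with $\mathsf{target}(p)\in V_0$ an edge $S(p)$ with $\mathsf{source}(S(p))=\mathsf{target}(p)$. A path $p=e_1e_2\ldots$ is consistent with $S$ if (when $\mathsf{source}(p)\in V_0$) $e_1=S(\lambda_{\mathsf{source}(p)})$ and for each $1\le i<|p|$ with $\mathsf{target}(e_i)\in V_0$ we have $e_{i+1}=S(e_1\ldots e_i)$. For $v\in V$, $\mathsf{col}(S,v)\subseteq C^\omega$ is the set of $\mathsf{col}(p)$ over all infinite paths $p$ from $v$ consistent with $S$. A memory structure is $\mathcal{M}=\langle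 M, m_{init},\delta\rangle$ with $M$ finite, $m_{init}\in M$, $\delta: M\times E\to M$ (extended to finite edge sequences in the usual way). $S$ is an $\mathcal{M}$-strategy if for all finite paths $p_1,p_2$ with $\mathsf{target}(p_1)=\mathsf{target}(p_2)\in V_0$, $\delta(m_{init},p_1)=\delta(m_{init},p_2)$ implies $S(p_1)=S(p_2)$. $\mathcal{M}$ is chromatic if there is $\sigma: M\times C\to M$ with $\delta(m,e)=\sigma(m,\mathsf{col}(e))$ for all $m,e$. A (chromatic) $q$-state strategy is an $\mathcal{M}$-strategy for some (chromatic) memory structure $\mathcal{M}$ with $|M|=q$. *)

theory Defs
  imports Main
begin

type_synonym ('v,'c) edge = "'v \<times> 'c \<times> 'v"

definition src :: "('v,'c) edge \<Rightarrow> 'v" where "src e = fst e"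
definition col :: "('v,'c) edge \<Rightarrow> 'c" where "col e = fst (snd e)"
definition tgt :: "('v,'c) edge \<Rightarrow> 'v" where "tgt e = snd (snd e)"

record ('v,'c) arena =
  aV :: "'v set"
  aV0 :: "'v set"
  aV1 :: "'v set"
  aE :: "('v,'c) edge set"
  aC :: "'c set"

definition arena :: "('v,'c) arena \<Rightarrow> bool" where
  "arena A \<longleftrightarrow> finite (aV A) \<and> finite (aE A) \<and> finite (aC A) \<and>
     aV A = aV0 A \<union> aV1 A \<and> aV0 A \<inter> aV1 A = {} \<and>
     aE A \<subseteq> aV A \<times> aC A \<times> aV A \<and>
     (\<forall>v\<in>aV A. \<exists>e\<in>aE A. src e = v)"

text \<open>A finite path is represented by its source node v and its list of edges es
  (es = [] is the 0-length path lambda_v).\<close>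
fun chain_from :: "('v,'c) edge set \<Rightarrow> 'v \<Rightarrow> ('v,'c) edge list \<Rightarrow> bool" where
  "chain_from E v [] = True"
| "chain_from E v (e # es) = (e \<in> E \<and> src e = v \<and> chain_from E (tgt e) es)"

definition fin_path :: "('v,'c) arena \<Rightarrow> 'v \<Rightarrow> ('v,'c) edge list \<Rightarrow> bool" where
  "fin_path A v es \<longleftrightarrow> v \<in> aV A \<and> chain_from (aE A) v es"

definition ptarget :: "'v \<Rightarrow> ('v,'c) edge list \<Rightarrow> 'v" where
  "ptarget v es = (if es = [] then v else tgt (last es))"

definition strategy :: "('v,'c) arena \<Rightarrow> ('v \<Rightarrow> ('v,'c) edge list \<Rightarrow> ('v,'c) edge) \<Rightarrow> bool" where
  "strategy A S \<longleftrightarrow> (\<forall>v es. fin_path A v es \<and> ptarget v es \<in> aV0 A \<longrightarrow>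
      S v es \<in> aE A \<and> src (S v es) = ptarget v es)"

definition consistent_inf_path ::
  "('v,'c) arena \<Rightarrow> ('v \<Rightarrow> ('v,'c) edge list \<Rightarrow> ('v,'c) edge) \<Rightarrow> 'v \<Rightarrow> (nat \<Rightarrow> ('v,'c) edge) \<Rightarrow> bool" where
  "consistent_inf_path A S v p \<longleftrightarrow>
     (\<forall>i. p i \<in> aE A) \<and> src (p 0) = v \<and> (\<forall>i. tgt (p i) = src (p (Suc i))) \<and>
     (v \<in> aV0 A \<longrightarrow> p 0 = S v []) \<and>
     (\<forall>i. tgt (p i) \<in> aV0 A \<longrightarrow> p (Suc i) = S v (map p [0..<Suc i]))"

definition col_set ::
  "('v,'c) arena \<Rightarrow> ('v \<Rightarrow> ('v,'c) edge list \<Rightarrow> ('v,'c) edge) \<Rightarrow> 'v \<Rightarrow> (nat \<Rightarrow> 'c) set" where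
  "col_set A S v = {(\<lambda>i. col (p i)) | p. consistent_inf_path A S v p}"

text \<open>Memory structures (M, m_init, delta); memory states are taken from nat
  (any finite memory set is in bijection with a finite set of naturals).\<close>
definition memory_structure ::
  "('v,'c) arena \<Rightarrow> nat set \<Rightarrow> nat \<Rightarrow> (nat \<Rightarrow> ('v,'c) edge \<Rightarrow> nat) \<Rightarrow> bool" where
  "memory_structure A M m0 \<delta> \<longleftrightarrow> finite M \<and> m0 \<in> M \<and> (\<forall>m\<in>M. \<forall>e\<in>aE A. \<delta> m e \<in> M)"

definition chromatic ::
  "('v,'c) arena \<Rightarrow> nat set \<Rightarrow> (nat \<Rightarrow> ('v,'c) edge \<Rightarrow> nat) \<Rightarrow> bool" where
  "chromatic A M \<delta> \<longleftrightarrow> (\<exists>\<sigma>. \<forall>m\<in>M. \<forall>e\<in>aE A. \<delta> m e = \<sigma> m (col e))"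

definition is_M_strategy ::
  "('v,'c) arena \<Rightarrow> nat \<Rightarrow> (nat \<Rightarrow> ('v,'c) edge \<Rightarrow> nat) \<Rightarrow>
     ('v \<Rightarrow> ('v,'c) edge list \<Rightarrow> ('v,'c) edge) \<Rightarrow> bool" where
  "is_M_strategy A m0 \<delta> S \<longleftrightarrow>
     (\<forall>v1 es1 v2 es2. fin_path A v1 es1 \<and> fin_path A v2 es2 \<and>
        ptarget v1 es1 = ptarget v2 es2 \<and> ptarget v1 es1 \<in> aV0 A \<and>
        foldl \<delta> m0 es1 = foldl \<delta> m0 es2 \<longrightarrow> S v1 es1 = S v2 es2)"

definition q_state_strategy ::
  "('v,'c) arena \<Rightarrow> ('v \<Rightarrow> ('v,'c) edge list \<Rightarrow> ('v,'c) edge) \<Rightarrow> nat \<Rightarrow> bool" where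
  "q_state_strategy A S q \<longleftrightarrow> strategy A S \<and>
     (\<exists>M m0 \<delta>. memory_structure A M m0 \<delta> \<and> card M = q \<and> is_M_strategy A m0 \<delta> S)"

definition chromatic_q_state_strategy ::
  "('v,'c) arena \<Rightarrow> ('v \<Rightarrow> ('v,'c) edge list \<Rightarrow> ('v,'c) edge) \<Rightarrow> nat \<Rightarrow> bool" where
  "chromatic_q_state_strategy A S q \<longleftrightarrow> strategy A S \<and>
     (\<exists>M m0 \<delta>. memory_structure A M m0 \<delta> \<and> chromatic A M \<delta> \<and> card M = q \<and>
        is_M_strategy A m0 \<delta> S)"

end

theory Submission
  imports Defs
begin

text \<open>Player 1 moves from node 0 to one of n loop nodes 3+j, along edges of one common colour,
  writes a vector xs \<in> {..<q}^n by looping with the colours (k, xs!k), and then exits to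
  Player 0's node 1 with a colour naming j. Remembering only the value written at position k
  while sitting in node 3+k, Player 0 can answer xs!j with q memory states. A chromatic memory
  cannot tell the loop nodes apart, so its state before the exit is a function of xs alone.
  The arena is co-deterministic, hence a colour sequence determines the play, and a strategy
  whose colour sequences are among those of the q-state strategy must also answer xs!j.
  So xs is recovered from the memory state, which forces at least q^n states.\<close>

lemma chain_from_append:
  "chain_from E v (xs @ ys) \<longleftrightarrow> chain_from E v xs \<and> chain_from E (ptarget v xs) ys"
  by (induction xs arbitrary: v) (auto simp: ptarget_def)

lemma chain_from_map_upt:
  assumes "\<And>i. i < k \<Longrightarrow> f i \<in> E"
    and "\<And>i. Suc i < k \<Longrightarrow> tgt (f i) = src (f (Suc i))"
    and "0 < k \<Longrightarrow> src (f 0) = v"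
  shows "chain_from E v (map f [0..<k])"
  using assms
proof (induction k)
  case (Suc k)
  then have "chain_from E (ptarget v (map f [0..<k])) [f k]"
    by (cases k) (auto simp: ptarget_def)
  with Suc show ?case by (simp add: chain_from_append)
qed simp

definition codeterministic :: "('v,'c) edge set \<Rightarrow> bool" where
  "codeterministic E \<longleftrightarrow> (\<forall>e\<in>E. \<forall>e'\<in>E. col e = col e' \<and> tgt e = tgt e' \<longrightarrow> e = e')"

lemma codeterministic_agree:
  assumes codet: "codeterministic E"
    and edges: "\<And>i. i \<le> k \<Longrightarrow> p i \<in> E \<and> p' i \<in> E"
    and chain: "\<And>i. i < k \<Longrightarrow> tgt (p i) = src (p (Suc i)) \<and> tgt (p' i) = src (p' (Suc i))"
    and cols: "\<And>i. i \<le> k \<Longrightarrow> col (p i) = col (p' i)"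
    and tgt_k: "tgt (p k) = tgt (p' k)"
    and "i \<le> k"
  shows "p i = p' i"
proof -
  have "p (k - d) = p' (k - d)" if "d \<le> k" for d
    using that
  proof (induction d)
    case 0
    show ?case using codet edges cols tgt_k unfolding codeterministic_def by auto
  next
    case (Suc d)
    then have "Suc (k - Suc d) = k - d" "k - Suc d < k" by auto
    then have "tgt (p (k - Suc d)) = tgt (p' (k - Suc d))"
      using Suc chain by (metis Suc_leD)
    then show ?case using codet edges cols unfolding codeterministic_def by (meson diff_le_self)
  qed
  from this[of "k - i"] \<open>i \<le> k\<close> show ?thesis by simp
qed

lemma col_set_subset_forces_choice:
  assumes S2: "consistent_inf_path A S2 v p"
    and sub: "col_set A S2 v \<subseteq> col_set A S1 v"
    and unique: "\<And>p'. consistent_inf_path A S1 v p' \<Longrightarrow> (\<And>i. col (p' i) = col (p i)) \<Longrightarrow>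
                   \<forall>i\<le>k. p' i = p i"
    and V0: "tgt (p k) \<in> aV0 A"
  shows "col (S2 v (map p [0..<Suc k])) = col (S1 v (map p [0..<Suc k]))"
proof -
  have "(\<lambda>i. col (p i)) \<in> col_set A S1 v"
    using S2 sub unfolding col_set_def by blast
  then obtain p' where S1: "consistent_inf_path A S1 v p'"
    and same_cols: "(\<lambda>i. col (p i)) = (\<lambda>i. col (p' i))"
    unfolding col_set_def by blast
  from same_cols have cols: "\<And>i. col (p' i) = col (p i)" by metis
  from S1 cols have agree: "\<forall>i\<le>k. p' i = p i" by (rule unique)
  then have prefix: "map p' [0..<Suc k] = map p [0..<Suc k]" by simp
  have "p (Suc k) = S2 v (map p [0..<Suc k])"
    using S2 V0 unfolding consistent_inf_path_def by blast
  moreover have "p' (Suc k) = S1 v (map p [0..<Suc k])"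
    using S1 V0 agree prefix unfolding consistent_inf_path_def by (metis order_refl)
  ultimately show ?thesis using cols by metis
qed

lemma memory_foldl_closed:
  assumes "memory_structure A M m0 \<delta>" "set es \<subseteq> aE A" "m \<in> M"
  shows "foldl \<delta> m es \<in> M"
  using assms(2,3)
proof (induction es arbitrary: m)
  case (Cons e es)
  then show ?case using assms(1) unfolding memory_structure_def by simp
qed simp

lemma chromatic_foldl_eq:
  assumes ms: "memory_structure A M m0 \<delta>" and chr: "chromatic A M \<delta>"
    and "set es \<subseteq> aE A" "set es' \<subseteq> aE A" "map col es = map col es'" "m \<in> M"
  shows "foldl \<delta> m es = foldl \<delta> m es'"
proof -
  obtain \<sigma> where \<sigma>: "\<And>m e. m \<in> M \<Longrightarrow> e \<in> aE A \<Longrightarrow> \<delta> m e = \<sigma> m (col e)"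
    using chr unfolding chromatic_def by blast
  from assms(3-6) show ?thesis
  proof (induction es arbitrary: es' m)
    case Nil then show ?case by simp
  next
    case (Cons e es)
    then obtain e' es'' where es': "es' = e' # es''" by auto
    have "\<delta> m e = \<delta> m e'" using Cons.prems es' \<sigma> by simp
    moreover have "\<delta> m e \<in> M" using Cons.prems ms unfolding memory_structure_def by simp
    ultimately show ?case using Cons es' by simp
  qed
qed

lemma mult_add_less_mult:
  assumes "k < n" "t < q"
  shows "k * q + t < n * (q::nat)"
proof -
  have "k * q + t < Suc k * q" using assms by simp
  also have "\<dots> \<le> n * q" using assms by (intro mult_right_mono) auto
  finally show ?thesis .
qed

text \<open>Colour k*q+t encodes the pair (k, t); n*q+i names the exit from loop node 3+i;
  n*q+n+m is Player 0's answer m; n*q+n+q is shared by all start edges and the sink loop.\<close>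

definition lower_bound_edges :: "nat \<Rightarrow> nat \<Rightarrow> (nat,nat) edge set" where
  "lower_bound_edges n q =
       (\<lambda>i. (0, n*q+n+q, 3+i)) ` {..<n}
     \<union> (\<lambda>(i,k,t). (3+i, k*q+t, 3+i)) ` ({..<n} \<times> {..<n} \<times> {..<q})
     \<union> (\<lambda>i. (3+i, n*q+i, 1)) ` {..<n}
     \<union> (\<lambda>m. (1, n*q+n+m, 2)) ` {..<q}
     \<union> {(2, n*q+n+q, 2)}"

definition lower_bound_arena :: "nat \<Rightarrow> nat \<Rightarrow> (nat,nat) arena" where
  "lower_bound_arena n q =
     \<lparr>aV = {..<n+3}, aV0 = {1}, aV1 = {..<n+3} - {1}, aE = lower_bound_edges n q,
      aC = col ` lower_bound_edges n q\<rparr>"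

text \<open>Edges leaving nodes 0, 1, 2 have colours \<ge> n*q, so the truncated src e - 3 does no harm.\<close>

definition recall_update :: "nat \<Rightarrow> nat \<Rightarrow> nat \<Rightarrow> (nat,nat) edge \<Rightarrow> nat" where
  "recall_update n q m e = (if col e < n*q \<and> col e div q = src e - 3 then col e mod q else m)"

definition recall_strategy :: "nat \<Rightarrow> nat \<Rightarrow> nat \<Rightarrow> (nat,nat) edge list \<Rightarrow> (nat,nat) edge" where
  "recall_strategy n q v es = (1, n*q+n + foldl (recall_update n q) 0 es mod q, 2)"

lemma lower_bound_edges_cases:
  assumes "e \<in> lower_bound_edges n q"
  obtains (start) i where "i < n" "e = (0, n*q+n+q, 3+i)"
    | (loop) i k t where "i < n" "k < n" "t < q" "k*q+t < n*q" "e = (3+i, k*q+t, 3+i)"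
    | (exit) i where "i < n" "e = (3+i, n*q+i, 1)"
    | (choice) m where "m < q" "e = (1, n*q+n+m, 2)"
    | (sink) "e = (2, n*q+n+q, 2)"
  using assms mult_add_less_mult unfolding lower_bound_edges_def by auto

lemma arena_lower_bound_arena:
  assumes "n > 0" "q > 0"
  shows "arena (lower_bound_arena n q)"
proof -
  let ?E = "lower_bound_edges n q"
  have "finite ?E" unfolding lower_bound_edges_def by auto
  moreover have "?E \<subseteq> {..<n+3} \<times> col ` ?E \<times> {..<n+3}"
  proof
    fix e assume e: "e \<in> ?E"
    then have "col e \<in> col ` ?E" by blast
    with e show "e \<in> {..<n+3} \<times> col ` ?E \<times> {..<n+3}"
      by (cases rule: lower_bound_edges_cases) (auto simp: col_def)
  qed
  moreover have "\<exists>e\<in>?E. src e = v" if "v < n+3" for v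
  proof (cases "v < 3")
    case True
    then consider "v = 0" | "v = 1" | "v = 2" by linarith
    then show ?thesis
    proof cases
      case 1
      with assms show ?thesis
        by (intro bexI[of _ "(0, n*q+n+q, 3)"]) (auto simp: lower_bound_edges_def src_def)
    next
      case 2
      with assms show ?thesis
        by (intro bexI[of _ "(1, n*q+n, 2)"]) (auto simp: lower_bound_edges_def src_def)
    next
      case 3
      then show ?thesis
        by (intro bexI[of _ "(2, n*q+n+q, 2)"]) (auto simp: lower_bound_edges_def src_def)
    qed
  next
    case False
    with that have "v - 3 < n" "v = 3 + (v - 3)" by auto
    then show ?thesis
      by (intro bexI[of _ "(v, n*q+(v-3), 1)"]) (auto simp: lower_bound_edges_def src_def)
  qed
  ultimately show ?thesis unfolding arena_def lower_bound_arena_def by auto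
qed

lemma codeterministic_lower_bound_edges: "codeterministic (lower_bound_edges n q)"
  unfolding codeterministic_def
proof (intro ballI impI)
  fix e e' assume e: "e \<in> lower_bound_edges n q" and e': "e' \<in> lower_bound_edges n q"
    and same: "col e = col e' \<and> tgt e = tgt e'"
  from e e' same show "e = e'"
    by (cases rule: lower_bound_edges_cases; cases rule: lower_bound_edges_cases[OF e'])
      (auto simp: col_def tgt_def)
qed

lemma recall_strategy_q_state:
  assumes "q > 0"
  shows "q_state_strategy (lower_bound_arena n q) (recall_strategy n q) q"
proof -
  have "strategy (lower_bound_arena n q) (recall_strategy n q)"
    using assms unfolding strategy_def
    by (auto simp: lower_bound_arena_def lower_bound_edges_def recall_strategy_def src_def)
  moreover have "memory_structure (lower_bound_arena n q) {..<q} 0 (recall_update n q)"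
    using assms unfolding memory_structure_def recall_update_def by auto
  moreover have "is_M_strategy (lower_bound_arena n q) 0 (recall_update n q) (recall_strategy n q)"
    unfolding is_M_strategy_def recall_strategy_def by auto
  ultimately show ?thesis unfolding q_state_strategy_def by fastforce
qed

definition probe :: "nat \<Rightarrow> nat \<Rightarrow> nat list \<Rightarrow> nat \<Rightarrow> nat \<Rightarrow> (nat,nat) edge" where
  "probe n q xs j i =
     (if i = 0 then (0, n*q+n+q, 3+j)
      else if i \<le> n then (3+j, (i-1)*q + xs!(i-1), 3+j)
      else (3+j, n*q+j, 1))"

lemma probe_in_edges:
  assumes "\<forall>k<n. xs!k < q" "j < n" "i < n+2"
  shows "probe n q xs j i \<in> lower_bound_edges n q"
proof -
  consider "i = 0" | "0 < i" "i \<le> n" | "i = n+1" using assms(3) by linarith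
  then show ?thesis
  proof cases
    case 2
    then have "(j, i-1, xs!(i-1)) \<in> {..<n} \<times> {..<n} \<times> {..<q}" using assms by auto
    then have "(3+j, (i-1)*q + xs!(i-1), 3+j) \<in> lower_bound_edges n q"
      unfolding lower_bound_edges_def by force
    with 2 show ?thesis by (simp add: probe_def)
  qed (use assms in \<open>auto simp: probe_def lower_bound_edges_def\<close>)
qed

lemma probe_fin_path:
  assumes "\<forall>k<n. xs!k < q" "j < n"
  shows "fin_path (lower_bound_arena n q) 0 (map (probe n q xs j) [0..<n+2])"
proof -
  have "chain_from (lower_bound_edges n q) 0 (map (probe n q xs j) [0..<n+2])"
    using probe_in_edges[OF assms]
    by (intro chain_from_map_upt) (auto simp: probe_def src_def tgt_def)
  then show ?thesis unfolding fin_path_def lower_bound_arena_def by simp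
qed

lemma probe_ptarget: "ptarget v (map (probe n q xs j) [0..<n+2]) = 1"
  by (simp add: ptarget_def probe_def tgt_def)

lemma probe_recall:
  assumes "\<forall>k<n. xs!k < q" "j < n"
  shows "foldl (recall_update n q) 0 (map (probe n q xs j) [0..<n+2]) = xs!j"
proof -
  have loops: "foldl (recall_update n q) 0 (map (probe n q xs j) [0..<Suc k]) = (if j < k then xs!j else 0)"
    if "k \<le> n" for k
    using that
  proof (induction k)
    case 0 then show ?case by (simp add: probe_def recall_update_def col_def)
  next
    case (Suc k)
    then have "k*q + xs!k < n*q" "xs!k < q" using assms mult_add_less_mult by auto
    with Suc show ?case by (auto simp: probe_def recall_update_def col_def src_def)
  qed
  show ?thesis using loops[of n] assms(2) by (simp add: probe_def recall_update_def col_def)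
qed

lemma probe_col_independent: "i \<le> n \<Longrightarrow> col (probe n q xs j i) = col (probe n q xs j' i)"
  by (simp add: probe_def col_def)

lemma exit_edge_target:
  assumes "e \<in> lower_bound_edges n q" "col e = n*q+j" "j < n"
  shows "tgt e = 1"
  using assms by (cases rule: lower_bound_edges_cases) (auto simp: col_def tgt_def)

lemma probe_determined_by_colours:
  assumes xs: "\<forall>k<n. xs!k < q" and j: "j < n"
    and edges: "\<And>i. i \<le> n+1 \<Longrightarrow> p i \<in> lower_bound_edges n q"
    and chain: "\<And>i. i \<le> n \<Longrightarrow> tgt (p i) = src (p (Suc i))"
    and cols: "\<And>i. i \<le> n+1 \<Longrightarrow> col (p i) = col (probe n q xs j i)"
    and "i \<le> n+1"
  shows "p i = probe n q xs j i"
proof (rule codeterministic_agree[OF codeterministic_lower_bound_edges _ _ cols _ \<open>i \<le> n+1\<close>])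
  show "p i \<in> lower_bound_edges n q \<and> probe n q xs j i \<in> lower_bound_edges n q" if "i \<le> n+1" for i
    using that edges probe_in_edges[OF xs j] by simp
  show "tgt (p i) = src (p (Suc i)) \<and> tgt (probe n q xs j i) = src (probe n q xs j (Suc i))"
    if "i < n+1" for i
    using that chain by (auto simp: probe_def src_def tgt_def)
  have "col (p (n+1)) = n*q+j" using cols[of "n+1"] by (simp add: probe_def col_def)
  then show "tgt (p (n+1)) = tgt (probe n q xs j (n+1))"
    using exit_edge_target[OF edges _ j] by (simp add: probe_def tgt_def)
qed

lemma probe_continuation_consistent:
  assumes xs: "\<forall>k<n. xs!k < q" and j: "j < n"
    and S2: "strategy (lower_bound_arena n q) S2"
  defines "p \<equiv> \<lambda>i. if i < n+2 then probe n q xs j i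
                   else if i = n+2 then S2 0 (map (probe n q xs j) [0..<n+2])
                   else (2, n*q+n+q, 2)"
  shows "consistent_inf_path (lower_bound_arena n q) S2 0 p"
proof -
  let ?A = "lower_bound_arena n q" and ?E = "lower_bound_edges n q"
  define e where "e = S2 0 (map (probe n q xs j) [0..<n+2])"
  have "e \<in> ?E" "src e = 1"
    using S2 probe_fin_path[OF xs j] probe_ptarget
    unfolding strategy_def e_def by (auto simp: lower_bound_arena_def)
  then obtain m where m: "e = (1, n*q+n+m, 2)"
    by (cases rule: lower_bound_edges_cases) (auto simp: src_def)
  have p_edges: "p i \<in> ?E" for i
    using probe_in_edges[OF xs j] \<open>e \<in> ?E\<close> by (auto simp: p_def e_def lower_bound_edges_def)
  have p_chain: "tgt (p i) = src (p (Suc i))" for i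
    using m by (auto simp: p_def e_def probe_def src_def tgt_def)
  have p_prefix: "map p [0..<n+2] = map (probe n q xs j) [0..<n+2]" by (simp add: p_def)
  show ?thesis
    unfolding consistent_inf_path_def
  proof (intro conjI allI impI)
    fix i assume "tgt (p i) \<in> aV0 ?A"
    then have "i = n+1"
      using m by (auto simp: p_def e_def probe_def tgt_def lower_bound_arena_def split: if_splits)
    then have "p (Suc i) = S2 0 (map (probe n q xs j) [0..<n+2])" by (simp add: p_def)
    with \<open>i = n+1\<close> p_prefix show "p (Suc i) = S2 0 (map p [0..<Suc i])"
      by (simp only: Suc_eq_plus1 add.assoc one_add_one)
  qed (use p_edges p_chain in \<open>simp_all add: p_def probe_def src_def lower_bound_arena_def\<close>)
qed

lemma imitation_choice_after_probe:
  assumes xs: "\<forall>k<n. xs!k < q" and j: "j < n"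
    and S2: "strategy (lower_bound_arena n q) S2"
    and sub: "col_set (lower_bound_arena n q) S2 0 \<subseteq>
              col_set (lower_bound_arena n q) (recall_strategy n q) 0"
  shows "col (S2 0 (map (probe n q xs j) [0..<n+2])) = n*q+n + xs!j"
proof -
  let ?A = "lower_bound_arena n q"
  define P where "P = map (probe n q xs j) [0..<n+2]"
  define p where "p = (\<lambda>i. if i < n+2 then probe n q xs j i
                           else if i = n+2 then S2 0 P else (2, n*q+n+q, 2))"
  have "consistent_inf_path ?A S2 0 p"
    unfolding p_def P_def by (rule probe_continuation_consistent[OF xs j S2])
  moreover have "\<forall>i\<le>n+1. p' i = p i"
    if p': "consistent_inf_path ?A (recall_strategy n q) 0 p'" and cols: "\<And>i. col (p' i) = col (p i)"
    for p'
  proof (intro allI impI)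
    fix i assume "i \<le> n+1"
    have p'_edges: "p' i \<in> lower_bound_edges n q" and p'_chain: "tgt (p' i) = src (p' (Suc i))" for i
      using p' unfolding consistent_inf_path_def lower_bound_arena_def by auto
    have p'_cols: "col (p' i) = col (probe n q xs j i)" if "i \<le> n+1" for i
      using cols[of i] that by (simp add: p_def)
    have "p' i = probe n q xs j i"
      using probe_determined_by_colours[OF xs j, where p=p'] p'_edges p'_chain p'_cols \<open>i \<le> n+1\<close>
      by blast
    with \<open>i \<le> n+1\<close> show "p' i = p i" by (simp add: p_def)
  qed
  moreover have "tgt (p (n+1)) \<in> aV0 ?A" by (simp add: p_def probe_def tgt_def lower_bound_arena_def)
  ultimately have "col (S2 0 (map p [0..<Suc (n+1)])) =
                   col (recall_strategy n q 0 (map p [0..<Suc (n+1)]))"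
    by (rule col_set_subset_forces_choice[OF _ sub])
  moreover have "map p [0..<Suc (n+1)] = P" unfolding P_def by (simp add: p_def)
  ultimately have "col (S2 0 P) = col (recall_strategy n q 0 P)" by simp
  also have "\<dots> = n*q+n + xs!j"
    using probe_recall[OF xs j] xs j unfolding P_def by (simp add: recall_strategy_def col_def)
  finally show ?thesis unfolding P_def .
qed

lemma chromatic_memory_before_exit:
  assumes ms: "memory_structure (lower_bound_arena n q) M m0 \<delta>"
    and chr: "chromatic (lower_bound_arena n q) M \<delta>"
    and xs: "\<forall>k<n. xs!k < q" and "j < n" "j' < n"
  shows "foldl \<delta> m0 (map (probe n q xs j) [0..<n+1]) = foldl \<delta> m0 (map (probe n q xs j') [0..<n+1])"
proof (rule chromatic_foldl_eq[OF ms chr])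
  have "set (map (probe n q xs i) [0..<n+1]) \<subseteq> aE (lower_bound_arena n q)" if "i < n" for i
    using probe_in_edges[OF xs that] by (auto simp: lower_bound_arena_def)
  then show "set (map (probe n q xs j) [0..<n+1]) \<subseteq> aE (lower_bound_arena n q)"
    "set (map (probe n q xs j') [0..<n+1]) \<subseteq> aE (lower_bound_arena n q)"
    using \<open>j < n\<close> \<open>j' < n\<close> by blast+
  show "map col (map (probe n q xs j) [0..<n+1]) = map col (map (probe n q xs j') [0..<n+1])"
    using probe_col_independent by simp
  show "m0 \<in> M" using ms unfolding memory_structure_def by simp
qed

lemma imitation_answer_determined_by_memory:
  assumes M_strat: "is_M_strategy (lower_bound_arena n q) m0 \<delta> S2"
    and S2: "strategy (lower_bound_arena n q) S2"
    and sub: "col_set (lower_bound_arena n q) S2 0 \<subseteq>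
              col_set (lower_bound_arena n q) (recall_strategy n q) 0"
    and xs: "\<forall>k<n. xs!k < q" and ys: "\<forall>k<n. ys!k < q" and j: "j < n"
    and same_memory: "foldl \<delta> m0 (map (probe n q xs j) [0..<n+1]) =
                      foldl \<delta> m0 (map (probe n q ys j) [0..<n+1])"
  shows "xs!j = ys!j"
proof -
  have "foldl \<delta> m0 (map (probe n q xs j) [0..<n+2]) = foldl \<delta> m0 (map (probe n q ys j) [0..<n+2])"
    using same_memory by (simp add: probe_def)
  moreover have "ptarget 0 (map (probe n q xs j) [0..<n+2]) \<in> aV0 (lower_bound_arena n q)"
    using probe_ptarget[of 0 n q xs j] by (simp add: lower_bound_arena_def)
  ultimately have "S2 0 (map (probe n q xs j) [0..<n+2]) = S2 0 (map (probe n q ys j) [0..<n+2])"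
    using M_strat probe_fin_path[OF xs j] probe_fin_path[OF ys j]
    unfolding is_M_strategy_def by (metis probe_ptarget)
  then show ?thesis
    using imitation_choice_after_probe[OF xs j S2 sub] imitation_choice_after_probe[OF ys j S2 sub]
    by simp
qed

lemma chromatic_imitation_memory_bound:
  assumes "n > 0"
    and S2: "chromatic_q_state_strategy (lower_bound_arena n q) S2 Q"
    and sub: "col_set (lower_bound_arena n q) S2 0 \<subseteq>
              col_set (lower_bound_arena n q) (recall_strategy n q) 0"
  shows "q ^ n \<le> Q"
proof -
  let ?A = "lower_bound_arena n q"
  define vectors where "vectors = {xs. set xs \<subseteq> {..<q} \<and> length xs = n}"
  have bounded: "\<forall>k<n. xs!k < q" if "xs \<in> vectors" for xs
    using that nth_mem unfolding vectors_def by fastforce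
  obtain M m0 \<delta> where strat: "strategy ?A S2" and ms: "memory_structure ?A M m0 \<delta>"
    and chr: "chromatic ?A M \<delta>" and "card M = Q" and M_strat: "is_M_strategy ?A m0 \<delta> S2"
    using S2 unfolding chromatic_q_state_strategy_def by blast
  have m0: "m0 \<in> M" and "finite M" using ms unfolding memory_structure_def by auto
  define \<mu> where "\<mu> xs = foldl \<delta> m0 (map (probe n q xs 0) [0..<n+1])" for xs
  have \<mu>_in_M: "\<mu> xs \<in> M" if "xs \<in> vectors" for xs
  proof -
    have "set (map (probe n q xs 0) [0..<n+1]) \<subseteq> aE ?A"
      using probe_in_edges[OF bounded[OF that] \<open>n > 0\<close>] by (auto simp: lower_bound_arena_def)
    then show ?thesis unfolding \<mu>_def using memory_foldl_closed[OF ms _ m0] by blast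
  qed
  have memory_before_exit: "foldl \<delta> m0 (map (probe n q xs j) [0..<n+1]) = \<mu> xs"
    if "xs \<in> vectors" "j < n" for xs j
    unfolding \<mu>_def using chromatic_memory_before_exit[OF ms chr bounded[OF that(1)] that(2) \<open>n > 0\<close>] .
  have "inj_on \<mu> vectors"
  proof (rule inj_onI)
    fix xs ys assume xs: "xs \<in> vectors" and ys: "ys \<in> vectors" and "\<mu> xs = \<mu> ys"
    show "xs = ys"
    proof (rule nth_equalityI)
      show "length xs = length ys" using xs ys unfolding vectors_def by simp
    next
      fix j assume "j < length xs"
      then have j: "j < n" using xs unfolding vectors_def by simp
      show "xs!j = ys!j"
        using memory_before_exit[OF xs j] memory_before_exit[OF ys j] \<open>\<mu> xs = \<mu> ys\<close>
        by (intro imitation_answer_determined_by_memory[OF M_strat strat sub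
              bounded[OF xs] bounded[OF ys] j]) simp
    qed
  qed
  then have "card vectors \<le> card M"
    using card_inj_on_le \<mu>_in_M \<open>finite M\<close> by blast
  moreover have "card vectors = q ^ n"
    unfolding vectors_def using card_lists_length_eq[of "{..<q}" n] by simp
  ultimately show ?thesis using \<open>card M = Q\<close> by simp
qed

theorem theorem3:
  fixes n q :: nat
  assumes "n > 0" and "q > 0"
  shows "\<exists>(A :: (nat, nat) arena) u S1.
           arena A \<and> card (aV A) = n + 3 \<and> u \<in> aV A \<and> q_state_strategy A S1 q \<and>
           (\<forall>S2 Q. chromatic_q_state_strategy A S2 Q \<and> col_set A S2 u \<subseteq> col_set A S1 u
                \<longrightarrow> Q \<ge> q ^ n)"
proof (intro exI conjI allI impI)
  show "arena (lower_bound_arena n q)" using assms by (rule arena_lower_bound_arena)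
  show "card (aV (lower_bound_arena n q)) = n + 3" by (simp add: lower_bound_arena_def)
  show "0 \<in> aV (lower_bound_arena n q)" by (simp add: lower_bound_arena_def)
  show "q_state_strategy (lower_bound_arena n q) (recall_strategy n q) q"
    using \<open>q > 0\<close> by (rule recall_strategy_q_state)
  fix S2 Q
  assume "chromatic_q_state_strategy (lower_bound_arena n q) S2 Q \<and>
    col_set (lower_bound_arena n q) S2 0 \<subseteq> col_set (lower_bound_arena n q) (recall_strategy n q) 0"
  then show "q ^ n \<le> Q" using chromatic_imitation_memory_bound[OF \<open>n > 0\<close>] by blast
qed

end
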